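(* Let $D$ be a strong nonseparable digraph and let $(D_0,D_1,\ldots,D_k)$ be an ear decomposition of $D$. Let $i\in\{1,\ldots,k\}$ and let $P_{i-1}=(x_0,x_1,\ldots,x_{r-1},x_r)$ be the ear of $D_{i-1}$ in $D$ (so $D_i=D_{i-1}\cup P_{i-1}$), with $l(P_{i-1})\geq 2$. If $D_i$ has a kernel $N$ but $D_{i-1}$ has no kernel, then one of the following holds: (1) $x_0\notin N$, $x_r\in N$ and $l(P_{i-1})$ is odd; (2) $x_0,x_r\notin N$ and $l(P_{i-1})$ is even.
   Context: All digraphs are finite, without loops or multiple arcs. Paths and cycles are directed; the length $l(P)$ of a path $P$ is its number of arcs. A digraph is strong if for every ordered pair of vertices $x,y$ there is a directed path from $x$ to $y$; it is nonseparable if its underlying undirected graph is nonseparable (has no cut vertex). For a subdigraph $H$ of $D$, an ear of $H$ in $D$ is a directed path $(x_0,\ldots,x_r)$ in $D$ whose end vertices lie in $H$ and whose internal vertices do not lie in $H$. An ear decomposition of a nonseparable strong digraph $D$ is a sequence $(D_0,\ldots,D_k)$ of nonseparable strong subdigraphs of $D$ such that $D_0$ is a directed cycle, $D_{j+1}=D_j\cup P_j$ with $P_j$ an ear of $D_j$ in $D$ for each $j\in\{0,\ldots,k-1\}$, and $D_k=D$. A kernel of a digraph is a set $N$ of vertices that is independent (no arc between two of its vertices) and absorbent (every vertex not in $N$ has an out-neighbour in $N$). *)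

theory Defs
  imports Main
begin

type_synonym 'a digraph = "'a set \<times> ('a \<times> 'a) set"

definition verts :: "'a digraph \<Rightarrow> 'a set" where "verts D = fst D"
definition arcs :: "'a digraph \<Rightarrow> ('a \<times> 'a) set" where "arcs D = snd D"

text \<open>Finite, arcs between vertices, no loops (no multiple arcs: arcs form a set).\<close>
definition digraph :: "'a digraph \<Rightarrow> bool" where
  "digraph D \<longleftrightarrow> finite (verts D) \<and> arcs D \<subseteq> verts D \<times> verts D
     \<and> (\<forall>x. (x, x) \<notin> arcs D)"

definition subdigraph :: "'a digraph \<Rightarrow> 'a digraph \<Rightarrow> bool" where
  "subdigraph H D \<longleftrightarrow> verts H \<subseteq> verts D \<and> arcs H \<subseteq> arcs D
     \<and> arcs H \<subseteq> verts H \<times> verts H"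

definition dunion :: "'a digraph \<Rightarrow> 'a digraph \<Rightarrow> 'a digraph" where
  "dunion D1 D2 = (verts D1 \<union> verts D2, arcs D1 \<union> arcs D2)"

definition strong :: "'a digraph \<Rightarrow> bool" where
  "strong D \<longleftrightarrow> (\<forall>x\<in>verts D. \<forall>y\<in>verts D. (x, y) \<in> (arcs D)\<^sup>*)"

definition ug_connected :: "'a set \<Rightarrow> ('a \<times> 'a) set \<Rightarrow> bool" where
  "ug_connected V A \<longleftrightarrow>
     (\<forall>x\<in>V. \<forall>y\<in>V. (x, y) \<in> ((A \<union> A\<inverse>) \<inter> (V \<times> V))\<^sup>*)"

definition nonseparable :: "'a digraph \<Rightarrow> bool" where
  "nonseparable D \<longleftrightarrow> ug_connected (verts D) (arcs D) \<and>
     (\<forall>v\<in>verts D. ug_connected (verts D - {v})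
        (arcs D \<inter> ((verts D - {v}) \<times> (verts D - {v}))))"

definition is_path :: "'a digraph \<Rightarrow> 'a list \<Rightarrow> bool" where
  "is_path D xs \<longleftrightarrow> xs \<noteq> [] \<and> distinct xs \<and> set xs \<subseteq> verts D \<and>
     (\<forall>j. Suc j < length xs \<longrightarrow> (xs ! j, xs ! Suc j) \<in> arcs D)"

definition path_len :: "'a list \<Rightarrow> nat" where
  "path_len xs = length xs - 1"

definition path_digraph :: "'a list \<Rightarrow> 'a digraph" where
  "path_digraph xs = (set xs, {(xs ! j, xs ! Suc j) | j. Suc j < length xs})"

definition is_dicycle :: "'a digraph \<Rightarrow> bool" where
  "is_dicycle C \<longleftrightarrow> (\<exists>xs. length xs \<ge> 2 \<and> distinct xs \<and>
     C = (set xs, {(xs ! j, xs ! ((Suc j) mod length xs)) | j. j < length xs}))"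

definition is_ear :: "'a digraph \<Rightarrow> 'a digraph \<Rightarrow> 'a list \<Rightarrow> bool" where
  "is_ear H D xs \<longleftrightarrow> is_path D xs \<and> hd xs \<in> verts H \<and> last xs \<in> verts H \<and>
     (\<forall>j. 0 < j \<and> Suc j < length xs \<longrightarrow> xs ! j \<notin> verts H)"

definition ear_decomposition ::
  "'a digraph \<Rightarrow> (nat \<Rightarrow> 'a digraph) \<Rightarrow> (nat \<Rightarrow> 'a list) \<Rightarrow> nat \<Rightarrow> bool" where
  "ear_decomposition D Ds Ps k \<longleftrightarrow>
     (\<forall>j\<le>k. subdigraph (Ds j) D \<and> strong (Ds j) \<and> nonseparable (Ds j)) \<and>
     is_dicycle (Ds 0) \<and>
     (\<forall>j<k. is_ear (Ds j) D (Ps j) \<and> Ds (Suc j) = dunion (Ds j) (path_digraph (Ps j))) \<and>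
     Ds k = D"

definition kernel :: "'a digraph \<Rightarrow> 'a set \<Rightarrow> bool" where
  "kernel D N \<longleftrightarrow> N \<subseteq> verts D \<and>
     (\<forall>x\<in>N. \<forall>y\<in>N. (x, y) \<notin> arcs D) \<and>
     (\<forall>x\<in>verts D - N. \<exists>y\<in>N. (x, y) \<in> arcs D)"

end

theory Submission
  imports Defs
begin

text \<open>
  Let \<open>N\<close> be a kernel of \<open>D\<^sub>i = D\<^sub>i\<^sub>-\<^sub>1 \<union> P\<close>. Its trace on \<open>D\<^sub>i\<^sub>-\<^sub>1\<close> is independent, and it
  is absorbent unless some vertex of \<open>D\<^sub>i\<^sub>-\<^sub>1\<close> is absorbed only along an ear arc; the only
  ear arc leaving \<open>D\<^sub>i\<^sub>-\<^sub>1\<close> is \<open>x\<^sub>0x\<^sub>1\<close>. Since \<open>D\<^sub>i\<^sub>-\<^sub>1\<close> has no kernel, \<open>x\<^sub>0 \<notin> N\<close> and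
  \<open>x\<^sub>1 \<in> N\<close>. An internal ear vertex has \<open>x\<^sub>j\<^sub>+\<^sub>1\<close> as its only out-neighbour in \<open>D\<^sub>i\<close>, so
  independence and absorbency force membership in \<open>N\<close> to alternate along the ear:
  \<open>x\<^sub>j \<in> N\<close> iff \<open>j\<close> is odd. Taking \<open>j = r\<close> gives the two cases.
\<close>

lemma verts_dunion [simp]: "verts (dunion D1 D2) = verts D1 \<union> verts D2"
  by (simp add: dunion_def verts_def)

lemma arcs_dunion [simp]: "arcs (dunion D1 D2) = arcs D1 \<union> arcs D2"
  by (simp add: dunion_def arcs_def)

lemma verts_path_digraph [simp]: "verts (path_digraph xs) = set xs"
  by (simp add: path_digraph_def verts_def)

lemma arcs_path_digraph [simp]:
  "arcs (path_digraph xs) = {(xs ! j, xs ! Suc j) | j. Suc j < length xs}"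
  by (simp add: path_digraph_def arcs_def)

lemma out_arc_of_path_vertex_outside:
  assumes "arcs H \<subseteq> verts H \<times> verts H" and "distinct xs" and "j < length xs"
    and "xs ! j \<notin> verts H" and "(xs ! j, y) \<in> arcs (dunion H (path_digraph xs))"
  shows "Suc j < length xs \<and> y = xs ! Suc j"
proof -
  from assms(1,4,5) obtain m where m: "xs ! j = xs ! m" "y = xs ! Suc m" "Suc m < length xs"
    by auto
  with assms(2,3) have "m = j"
    by (metis Suc_lessD nth_eq_iff_index_eq)
  with m show ?thesis by simp
qed

lemma kernel_restrict_to_ear_base:
  assumes kernel: "kernel (dunion H (path_digraph xs)) N"
    and ear: "is_ear H D xs" and arcs_H: "arcs H \<subseteq> verts H \<times> verts H"
    and first_arc: "hd xs \<in> N \<or> xs ! 1 \<notin> N"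
  shows "kernel H (N \<inter> verts H)"
  unfolding kernel_def
proof (intro conjI ballI)
  show "N \<inter> verts H \<subseteq> verts H" by auto
next
  fix x y assume "x \<in> N \<inter> verts H" "y \<in> N \<inter> verts H"
  then show "(x, y) \<notin> arcs H"
    using kernel unfolding kernel_def by auto
next
  fix x assume x: "x \<in> verts H - N \<inter> verts H"
  then have "x \<in> verts (dunion H (path_digraph xs)) - N"
    by auto
  then obtain y where y: "y \<in> N" "(x, y) \<in> arcs (dunion H (path_digraph xs))"
    using kernel unfolding kernel_def by blast
  show "\<exists>y\<in>N \<inter> verts H. (x, y) \<in> arcs H"
  proof (cases "(x, y) \<in> arcs H")
    case True
    with y arcs_H show ?thesis by auto
  next
    case False
    with y obtain j where j: "x = xs ! j" "y = xs ! Suc j" "Suc j < length xs"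
      by auto
    have "j = 0"
      using ear j x unfolding is_ear_def by (metis Diff_iff neq0_conv)
    moreover have "hd xs = xs ! 0"
      using j(3) by (cases xs) auto
    ultimately show ?thesis
      using j x y first_arc by auto
  qed
qed

lemma kernel_alternates_on_ear:
  assumes kernel: "kernel (dunion H (path_digraph xs)) N"
    and ear: "is_ear H D xs" and arcs_H: "arcs H \<subseteq> verts H \<times> verts H"
    and internal: "0 < j" and j: "Suc j < length xs"
  shows "xs ! Suc j \<in> N \<longleftrightarrow> xs ! j \<notin> N"
proof
  assume "xs ! Suc j \<in> N"
  moreover have "(xs ! j, xs ! Suc j) \<in> arcs (dunion H (path_digraph xs))"
    using j by auto
  ultimately show "xs ! j \<notin> N"
    using kernel unfolding kernel_def by blast
next
  assume "xs ! j \<notin> N"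
  moreover have "xs ! j \<in> verts (dunion H (path_digraph xs))"
    using j by simp
  ultimately obtain y where y: "y \<in> N" "(xs ! j, y) \<in> arcs (dunion H (path_digraph xs))"
    using kernel unfolding kernel_def by blast
  have "distinct xs" and "xs ! j \<notin> verts H"
    using ear internal j unfolding is_ear_def is_path_def by auto
  with y have "y = xs ! Suc j"
    using out_arc_of_path_vertex_outside[OF arcs_H] j by (meson Suc_lessD)
  with y show "xs ! Suc j \<in> N"
    by simp
qed

lemma kernel_on_ear_odd_positions:
  assumes kernel: "kernel (dunion H (path_digraph xs)) N"
    and ear: "is_ear H D xs" and arcs_H: "arcs H \<subseteq> verts H \<times> verts H"
    and second: "xs ! 1 \<in> N" and "1 \<le> j" and "j < length xs"
  shows "xs ! j \<in> N \<longleftrightarrow> odd j"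
  using assms(5,6)
proof (induction j rule: dec_induct)
  case base
  with second show ?case by simp
next
  case (step j)
  then show ?case
    using kernel_alternates_on_ear[OF kernel ear arcs_H, of j] by simp
qed

theorem mainTheorem7:
  fixes D :: "'a digraph" and Ds :: "nat \<Rightarrow> 'a digraph" and Ps :: "nat \<Rightarrow> 'a list"
    and k i :: nat and N :: "'a set"
  assumes "digraph D" and "strong D" and "nonseparable D"
    and "ear_decomposition D Ds Ps k"
    and "1 \<le> i" and "i \<le> k"
    and "path_len (Ps (i - 1)) \<ge> 2"
    and "kernel (Ds i) N"
    and "\<not> (\<exists>M. kernel (Ds (i - 1)) M)"
  shows "(hd (Ps (i - 1)) \<notin> N \<and> last (Ps (i - 1)) \<in> N \<and> odd (path_len (Ps (i - 1))))
       \<or> (hd (Ps (i - 1)) \<notin> N \<and> last (Ps (i - 1)) \<notin> N \<and> even (path_len (Ps (i - 1))))"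
proof -
  define H xs where "H = Ds (i - 1)" and "xs = Ps (i - 1)"
  have "i - 1 < k" and "Suc (i - 1) = i"
    using assms(5,6) by simp_all
  then have ear: "is_ear H D xs" and "Ds i = dunion H (path_digraph xs)"
    and "subdigraph H D"
    using assms(4) unfolding ear_decomposition_def H_def xs_def by fastforce+
  then have kernel: "kernel (dunion H (path_digraph xs)) N"
    and arcs_H: "arcs H \<subseteq> verts H \<times> verts H"
    using assms(8) unfolding subdigraph_def by simp_all
  have first_arc: "hd xs \<notin> N \<and> xs ! 1 \<in> N"
    using kernel_restrict_to_ear_base[OF kernel ear arcs_H] assms(9) H_def by blast
  have "1 \<le> path_len xs" and "path_len xs < length xs" and "xs \<noteq> []"
    using assms(7)[folded xs_def] unfolding path_len_def by auto
  moreover from this have "last xs = xs ! path_len xs"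
    unfolding path_len_def by (simp add: last_conv_nth)
  ultimately have "last xs \<in> N \<longleftrightarrow> odd (path_len xs)"
    using kernel_on_ear_odd_positions[OF kernel ear arcs_H] first_arc by simp
  with first_arc show ?thesis
    unfolding xs_def by auto
qed

end
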